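(* Consider the data-selling model described in the context, with $n$ buyers, and assume $z_0<\frac{1}{2\sqrt{\gamma}}\cdot\frac{n+1}{2n+1}$. Let $G$ be a core-periphery network on $N$ with periphery $P$, $|P|=m$, and core $K=N\setminus P$, $|K|=n-m$. Evaluate the payoffs on $G$ at the optimal contract whose target set is $P$. Then $G$ is Pareto-efficient among networks on $N$ with $n$ nodes: there is no network $G'$ on $N$ and optimal contract $C'$ for $G'$ such that - the seller's optimal profit under $G'$ is at least that under $G$, and - every buyer's expected payoff under $(G',C')$ is at least his payoff under $G$, with strict inequality for at least one buyer.
   Context: Model. There is a finite set of buyers $N=\{1,\dots,n\}$ and an undirected network $G$ on $N$; $N_i$ is the set of neighbors of $i$. A state $\theta\sim N(0,1/z_0)$ with $z_0>0$ is unknown to all. A contract $C$ consists of a target set $M(C)\subseteq N$, a common precision $z>0$, and prices $p_i\ge0$ for $i\in M(C)$. Each $i\in M(C)$ receives a signal $s_i=\theta+\varepsilon_i$, with $\varepsilon_i\sim N(0,1/z)$ independent. Each buyer observes the signals of his neighbors in $M(C)$ (and his own if he is in $M(C)$) and chooses $a_i$ to maximize $E[-(a_i-\theta)^2]$. With $m_i=|N_i\cap M(C)|$, buyer $i\in M(C)$ gets expected payoff $-\frac{1}{z_0+(m_i+1)z}-p_i$, and buyer $i\notin M(C)$ gets $-\frac{1}{z_0+m_iz}$. Buyer $i\in M(C)$ accepts iff $p_i\le \frac{1}{z_0+m_iz}-\frac{1}{z_0+(m_i+1)z}$. A contract is feasible if all $i\in M(C)$ accept. The seller's profit is $\sum_{i\in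 M(C)}p_i-\gamma z$ with $\gamma>0$. An optimal contract is a feasible contract maximizing the seller's profit. A core-periphery network with core $K$ and periphery $P$ (a partition of $N$) is one in which each core node is linked to every other node, and no two periphery nodes are linked. *)

theory Defs
  imports Complex_Main
begin

definition buyers :: "nat \<Rightarrow> nat set" where
  "buyers n = {1..n}"

definition network :: "nat \<Rightarrow> (nat \<Rightarrow> nat \<Rightarrow> bool) \<Rightarrow> bool" where
  "network n E \<longleftrightarrow>
     (\<forall>i j. E i j \<longrightarrow> i \<in> buyers n \<and> j \<in> buyers n) \<and>
     (\<forall>i j. E i j \<longrightarrow> E j i) \<and> (\<forall>i. \<not> E i i)"

definition nbrs :: "nat \<Rightarrow> (nat \<Rightarrow> nat \<Rightarrow> bool) \<Rightarrow> nat \<Rightarrow> nat set" where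
  "nbrs n E i = {j \<in> buyers n. E i j}"

text \<open>A contract: target set M(C), common precision z, prices p (only p i for i in M(C) matter).\<close>
record contract =
  target :: "nat set"
  prec :: real
  price :: "nat \<Rightarrow> real"

definition mcount :: "nat \<Rightarrow> (nat \<Rightarrow> nat \<Rightarrow> bool) \<Rightarrow> contract \<Rightarrow> nat \<Rightarrow> nat" where
  "mcount n E C i = card (nbrs n E i \<inter> target C)"

definition buyer_payoff ::
  "nat \<Rightarrow> real \<Rightarrow> (nat \<Rightarrow> nat \<Rightarrow> bool) \<Rightarrow> contract \<Rightarrow> nat \<Rightarrow> real" where
  "buyer_payoff n z0 E C i =
     (if i \<in> target C
      then - 1 / (z0 + (real (mcount n E C i) + 1) * prec C) - price C i
      else - 1 / (z0 + real (mcount n E C i) * prec C))"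

definition feasible ::
  "nat \<Rightarrow> real \<Rightarrow> (nat \<Rightarrow> nat \<Rightarrow> bool) \<Rightarrow> contract \<Rightarrow> bool" where
  "feasible n z0 E C \<longleftrightarrow>
     target C \<subseteq> buyers n \<and> prec C > 0 \<and>
     (\<forall>i \<in> target C. price C i \<ge> 0 \<and>
        price C i \<le> 1 / (z0 + real (mcount n E C i) * prec C)
                    - 1 / (z0 + (real (mcount n E C i) + 1) * prec C))"

definition profit :: "real \<Rightarrow> contract \<Rightarrow> real" where
  "profit \<gamma> C = (\<Sum>i \<in> target C. price C i) - \<gamma> * prec C"

definition optimal_contract ::
  "nat \<Rightarrow> real \<Rightarrow> real \<Rightarrow> (nat \<Rightarrow> nat \<Rightarrow> bool) \<Rightarrow> contract \<Rightarrow> bool" where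
  "optimal_contract n z0 \<gamma> E C \<longleftrightarrow>
     feasible n z0 E C \<and>
     (\<forall>C'. feasible n z0 E C' \<longrightarrow> profit \<gamma> C' \<le> profit \<gamma> C)"

definition core_periphery ::
  "nat \<Rightarrow> (nat \<Rightarrow> nat \<Rightarrow> bool) \<Rightarrow> nat set \<Rightarrow> nat set \<Rightarrow> bool" where
  "core_periphery n E K P \<longleftrightarrow>
     K \<union> P = buyers n \<and> K \<inter> P = {} \<and>
     (\<forall>k \<in> K. \<forall>j \<in> buyers n. j \<noteq> k \<longrightarrow> E k j) \<and>
     (\<forall>i \<in> P. \<forall>j \<in> P. \<not> E i j)"

end

theory Submission
  imports Defs
begin

(* Under the smallness assumption on z0 every optimal contract sells to an independent set:
   by a greedy minimum-degree (Caro-Wei type) argument, a target set containing an edge earns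
   less than selling to an independent subset of it, either at the same precision or at
   precision 2 z0. Then every targeted buyer ends up with payoff -1/z0, and the profit from
   k targeted buyers at precision v is k (1/z0 - 1/(z0 + v)) - gamma v, strictly concave in v.
   A Pareto improvement over the core-periphery network must target exactly the periphery:
   a targeted core buyer would lose the signals of the whole periphery, and fewer targets
   means less profit. So the strictly better-off buyer is a core buyer who observes at most
   |P| signals, which forces a strictly higher precision, contradicting the uniqueness of the
   profit-maximising precision. *)

section \<open>Value of a signal\<close>

text \<open>The value of his own signal to a buyer who already observes \<open>d\<close> signals of precision
  \<open>z\<close>; feasibility caps the price of buyer \<open>i\<close> at \<open>signal_value z0 (prec C) (mcount n E C i)\<close>.\<close>

definition signal_value :: "real \<Rightarrow> real \<Rightarrow> nat \<Rightarrow> real" where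
  "signal_value z0 z d = 1 / (z0 + real d * z) - 1 / (z0 + (real d + 1) * z)"

lemma signal_value_0: "signal_value z0 z 0 = 1 / z0 - 1 / (z0 + z)"
  by (simp add: signal_value_def)

lemma signal_value_eq:
  assumes "z0 > 0" "z > 0"
  shows "signal_value z0 z d = z / ((z0 + real d * z) * (z0 + (real d + 1) * z))"
proof -
  have "z0 + real d * z > 0" "z0 + (real d + 1) * z > 0"
    using assms by (auto intro: add_pos_nonneg)
  then show ?thesis by (simp add: signal_value_def field_simps)
qed

lemma signal_value_pos:
  assumes "z0 > 0" "z > 0"
  shows "signal_value z0 z d > 0"
  using assms by (simp add: signal_value_eq add_pos_nonneg)

lemma signal_value_antimono:
  assumes "z0 > 0" "z > 0" "d \<le> d'"
  shows "signal_value z0 z d' \<le> signal_value z0 z d"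
proof -
  have pos: "z0 + real d * z > 0" "z0 + (real d + 1) * z > 0"
    using assms by (auto intro: add_pos_nonneg)
  have "z0 + real d * z \<le> z0 + real d' * z" "z0 + (real d + 1) * z \<le> z0 + (real d' + 1) * z"
    using assms by (auto intro: mult_right_mono)
  then have le: "(z0 + real d * z) * (z0 + (real d + 1) * z) \<le> (z0 + real d' * z) * (z0 + (real d' + 1) * z)"
    using pos by (intro mult_mono) auto
  moreover have "0 < (z0 + real d * z) * (z0 + (real d + 1) * z)"
    using pos by simp
  ultimately show ?thesis
    unfolding signal_value_eq[OF assms(1,2)] using assms(2)
    by (simp add: divide_left_mono mult_pos_pos less_le_trans)
qed

lemma signal_value_degree_bound:
  assumes z0: "z0 > 0" and z: "z > 0" and d: "d \<ge> 1"
  shows "(real d + 1) * signal_value z0 z d < 2 / (5 * z0)"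
proof -
  define D where "D = real d"
  have D: "D \<ge> 1" using d by (simp add: D_def)
  define Y where "Y = (z0 + D * z) * (z0 + (D + 1) * z)"
  have Y: "Y > 0" using z0 z D by (simp add: Y_def add_pos_nonneg)
  \<comment> \<open>a sum-of-squares certificate for \<open>2 Y - 5 z0 (D + 1) z > 0\<close>\<close>
  have "16 * (2 * Y - 5 * z0 * ((D + 1) * z))
      = 2 * (4 * z0 - (D + 3) * z)\<^sup>2 + 2 * z\<^sup>2 * (15 * D\<^sup>2 + 10 * D - 9)"
    by (simp add: Y_def algebra_simps power2_eq_square)
  moreover have "15 * D\<^sup>2 + 10 * D - 9 > 0"
    using D one_le_power[OF D, of 2] by linarith
  then have "2 * z\<^sup>2 * (15 * D\<^sup>2 + 10 * D - 9) > 0"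
    using z by simp
  moreover have "2 * (4 * z0 - (D + 3) * z)\<^sup>2 \<ge> 0"
    by simp
  ultimately have "16 * (2 * Y - 5 * z0 * ((D + 1) * z)) > 0"
    by linarith
  then have "0 < 2 * Y - 5 * z0 * ((D + 1) * z)"
    by (simp only: zero_less_mult_iff) simp
  then have "5 * z0 * ((D + 1) * z) < 2 * Y"
    by linarith
  then have "(D + 1) * z / Y < 2 / (5 * z0)"
    using Y z0 by (simp add: field_simps)
  then show ?thesis
    using z0 z by (simp add: signal_value_eq D_def Y_def)
qed

section \<open>Independent subsets of a graph\<close>

definition independent_set :: "(nat \<Rightarrow> nat \<Rightarrow> bool) \<Rightarrow> nat set \<Rightarrow> bool" where
  "independent_set E J \<longleftrightarrow> (\<forall>i\<in>J. \<forall>j\<in>J. \<not> E i j)"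

definition degree_in :: "(nat \<Rightarrow> nat \<Rightarrow> bool) \<Rightarrow> nat set \<Rightarrow> nat \<Rightarrow> nat" where
  "degree_in E S i = card {j \<in> S. E i j}"

lemma sum_degree_in_subset_le:
  fixes \<phi> :: "nat \<Rightarrow> real"
  assumes "antimono \<phi>" "finite S" "S' \<subseteq> S"
  shows "(\<Sum>i\<in>S'. \<phi> (degree_in E S i)) \<le> (\<Sum>i\<in>S'. \<phi> (degree_in E S' i))"
proof (rule sum_mono)
  fix i
  have "degree_in E S' i \<le> degree_in E S i"
    unfolding degree_in_def using assms(2,3) by (intro card_mono) auto
  then show "\<phi> (degree_in E S i) \<le> \<phi> (degree_in E S' i)"
    by (rule antimonoD[OF assms(1)])
qed

lemma sum_closed_neighbourhood_le:
  fixes \<phi> :: "nat \<Rightarrow> real"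
  assumes "antimono \<phi>" "finite S" "\<And>i. \<not> E i i"
    and v: "v \<in> S" and min: "\<And>i. i \<in> S \<Longrightarrow> degree_in E S v \<le> degree_in E S i"
  shows "(\<Sum>i\<in>insert v {j\<in>S. E v j}. \<phi> (degree_in E S i))
    \<le> (real (degree_in E S v) + 1) * \<phi> (degree_in E S v)"
proof -
  have "(\<Sum>i\<in>insert v {j\<in>S. E v j}. \<phi> (degree_in E S i))
      \<le> real (card (insert v {j\<in>S. E v j})) * \<phi> (degree_in E S v)"
    using v min antimonoD[OF assms(1)] by (intro sum_bounded_above) blast
  also have "card (insert v {j\<in>S. E v j}) = degree_in E S v + 1"
    using assms(2,3) by (simp add: degree_in_def)
  finally show ?thesis
    by (simp add: add.commute)
qed

lemma sum_degree_in_remove_closed_neighbourhood: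
  fixes \<phi> :: "nat \<Rightarrow> real"
  assumes "antimono \<phi>" "finite S" "\<And>i. \<not> E i i"
    and v: "v \<in> S" and min: "\<And>i. i \<in> S \<Longrightarrow> degree_in E S v \<le> degree_in E S i"
  defines "S' \<equiv> S - insert v {j\<in>S. E v j}"
  shows "(\<Sum>i\<in>S. \<phi> (degree_in E S i))
    \<le> (\<Sum>i\<in>S'. \<phi> (degree_in E S' i)) + (real (degree_in E S v) + 1) * \<phi> (degree_in E S v)"
proof -
  have "(\<Sum>i\<in>S. \<phi> (degree_in E S i)) = (\<Sum>i\<in>S'. \<phi> (degree_in E S i))
      + (\<Sum>i\<in>insert v {j\<in>S. E v j}. \<phi> (degree_in E S i))"
    unfolding S'_def using v assms(2) by (intro sum.subset_diff) auto
  moreover have "(\<Sum>i\<in>S'. \<phi> (degree_in E S i)) \<le> (\<Sum>i\<in>S'. \<phi> (degree_in E S' i))"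
    using assms(1,2) by (intro sum_degree_in_subset_le) (auto simp: S'_def)
  moreover have "(\<Sum>i\<in>insert v {j\<in>S. E v j}. \<phi> (degree_in E S i))
      \<le> (real (degree_in E S v) + 1) * \<phi> (degree_in E S v)"
    using assms(1-3) v min by (rule sum_closed_neighbourhood_le)
  ultimately show ?thesis
    by linarith
qed

lemma independent_subset_bounds_degree_sum:
  fixes \<phi> :: "nat \<Rightarrow> real"
  assumes sym: "\<And>i j. E i j \<Longrightarrow> E j i" and irrefl: "\<And>i. \<not> E i i"
    and "antimono \<phi>"
    and bound: "\<And>d. (real d + 1) * \<phi> d \<le> c"
    and strict_bound: "\<And>d. d \<ge> 1 \<Longrightarrow> (real d + 1) * \<phi> d < c"
    and "finite S"
  shows "\<exists>J \<subseteq> S. independent_set E J \<and> (S \<noteq> {} \<longrightarrow> J \<noteq> {}) \<and>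
    (\<Sum>i\<in>S. \<phi> (degree_in E S i)) \<le> c * card J \<and>
    (\<not> independent_set E S \<longrightarrow> (\<Sum>i\<in>S. \<phi> (degree_in E S i)) < c * card J)"
  using \<open>finite S\<close>
proof (induction S rule: finite_psubset_induct)
  case (psubset S)
  show ?case
  proof (cases "S = {}")
    case True
    then show ?thesis by (auto simp: independent_set_def)
  next
    case False
    \<comment> \<open>greedy step: keep a vertex of minimum degree and delete its closed neighbourhood\<close>
    obtain v where v: "v \<in> S" and min: "\<And>i. i \<in> S \<Longrightarrow> degree_in E S v \<le> degree_in E S i"
      using False ex_has_least_nat[of "\<lambda>i. i \<in> S" _ "degree_in E S"] by blast
    define S' where "S' = S - insert v {j\<in>S. E v j}"
    have "S' \<subset> S"
      using v by (auto simp: S'_def)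
    then obtain J' where J': "J' \<subseteq> S'" "independent_set E J'"
      and le: "(\<Sum>i\<in>S'. \<phi> (degree_in E S' i)) \<le> c * card J'"
      and lt: "\<not> independent_set E S' \<Longrightarrow> (\<Sum>i\<in>S'. \<phi> (degree_in E S' i)) < c * card J'"
      using psubset.IH by blast
    define J where "J = insert v J'"
    have "J \<subseteq> S" "J \<noteq> {}"
      using J'(1) v by (auto simp: J_def S'_def)
    moreover have "independent_set E J"
      using J' sym irrefl by (auto simp: independent_set_def J_def S'_def)
    moreover have card_J: "card J = card J' + 1"
      using J'(1) psubset.hyps by (auto simp: J_def S'_def intro: finite_subset card_insert_disjoint)
    moreover have sum_S: "(\<Sum>i\<in>S. \<phi> (degree_in E S i))
        \<le> (\<Sum>i\<in>S'. \<phi> (degree_in E S' i)) + (real (degree_in E S v) + 1) * \<phi> (degree_in E S v)"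
      unfolding S'_def using \<open>antimono \<phi>\<close> psubset.hyps irrefl v min
      by (rule sum_degree_in_remove_closed_neighbourhood)
    moreover have "(\<Sum>i\<in>S. \<phi> (degree_in E S i)) < c * card J" if "\<not> independent_set E S"
    proof (cases "degree_in E S v \<ge> 1")
      case True
      then show ?thesis
        using sum_S le strict_bound[OF True] card_J by (simp add: algebra_simps)
    next
      case False
      then have "{j\<in>S. E v j} = {}"
        using psubset.hyps by (simp add: degree_in_def not_less_eq_eq)
      then have "\<not> independent_set E S'"
        using that sym unfolding independent_set_def S'_def by blast
      then show ?thesis
        using sum_S lt bound[of "degree_in E S v"] card_J by (simp add: algebra_simps)
    qed
    moreover have "(\<Sum>i\<in>S. \<phi> (degree_in E S i)) \<le> c * card J"
      using sum_S le bound[of "degree_in E S v"] card_J by (simp add: algebra_simps)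
    ultimately show ?thesis
      by (intro exI[of _ J]) auto
  qed
qed

section \<open>Optimal contracts\<close>

lemma feasible_finite_target: "feasible n z0 E C \<Longrightarrow> finite (target C)"
  unfolding feasible_def buyers_def by (meson finite_atLeastAtMost finite_subset)

lemma mcount_eq_degree_in:
  "target C \<subseteq> buyers n \<Longrightarrow> mcount n E C i = degree_in E (target C) i"
  unfolding mcount_def degree_in_def nbrs_def by (rule arg_cong[where f = card]) blast

lemma mcount_independent_target:
  assumes "independent_set E (target C)" "i \<in> target C"
  shows "mcount n E C i = 0"
proof -
  have "nbrs n E i \<inter> target C = {}"
    using assms by (auto simp: nbrs_def independent_set_def)
  then show ?thesis
    by (simp add: mcount_def)
qed

lemma optimal_contract_price:
  assumes opt: "optimal_contract n z0 \<gamma> E C" and i: "i \<in> target C"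
  shows "price C i = signal_value z0 (prec C) (mcount n E C i)"
proof (rule ccontr)
  define b where "b = signal_value z0 (prec C) (mcount n E C i)"
  assume "price C i \<noteq> signal_value z0 (prec C) (mcount n E C i)"
  moreover have feas: "feasible n z0 E C"
    using opt by (simp add: optimal_contract_def)
  ultimately have below: "price C i < b"
    using i by (auto simp: feasible_def signal_value_def b_def)
  define C' where "C' = C\<lparr>price := (price C)(i := b)\<rparr>"
  have "feasible n z0 E C'"
    using feas below
    by (auto simp: feasible_def C'_def mcount_def b_def signal_value_def)
  then have "profit \<gamma> C' \<le> profit \<gamma> C"
    using opt by (simp add: optimal_contract_def)
  moreover have "profit \<gamma> C' = profit \<gamma> C + (b - price C i)"
  proof -
    have "(\<Sum>j\<in>target C. ((price C)(i := b)) j) = b + (\<Sum>j\<in>target C - {i}. price C j)"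
      using i feasible_finite_target[OF feas] by (simp add: sum.remove)
    moreover have "(\<Sum>j\<in>target C. price C j) = price C i + (\<Sum>j\<in>target C - {i}. price C j)"
      using i feasible_finite_target[OF feas] by (simp add: sum.remove)
    ultimately show ?thesis
      by (simp add: profit_def C'_def)
  qed
  ultimately show False
    using below by simp
qed

lemma optimal_contract_profit:
  assumes "optimal_contract n z0 \<gamma> E C"
  shows "profit \<gamma> C
    = (\<Sum>i\<in>target C. signal_value z0 (prec C) (mcount n E C i)) - \<gamma> * prec C"
  using optimal_contract_price[OF assms] by (simp add: profit_def)

lemma optimal_contract_target_nonempty:
  assumes opt: "optimal_contract n z0 \<gamma> E C" and "\<gamma> > 0"
  shows "target C \<noteq> {}"
proof
  assume empty: "target C = {}"
  define C' where "C' = C\<lparr>prec := prec C / 2\<rparr>"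
  have "feasible n z0 E C'"
    using opt empty by (simp add: optimal_contract_def feasible_def C'_def)
  then have "profit \<gamma> C' \<le> profit \<gamma> C"
    using opt by (simp add: optimal_contract_def)
  moreover have "prec C > 0"
    using opt by (simp add: optimal_contract_def feasible_def)
  ultimately show False
    using empty \<open>\<gamma> > 0\<close> by (simp add: profit_def C'_def)
qed

definition independent_contract :: "real \<Rightarrow> nat set \<Rightarrow> real \<Rightarrow> contract" where
  "independent_contract z0 J v = \<lparr>target = J, prec = v, price = (\<lambda>_. signal_value z0 v 0)\<rparr>"

lemma independent_contract_feasible:
  assumes "J \<subseteq> buyers n" "independent_set E J" "z0 > 0" "v > 0"
  shows "feasible n z0 E (independent_contract z0 J v)"
proof -
  have "mcount n E (independent_contract z0 J v) i = 0" if "i \<in> J" for i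
    using mcount_independent_target[of E "independent_contract z0 J v"] assms(2) that
    by (simp add: independent_contract_def)
  then show ?thesis
    using assms signal_value_pos[of z0 v 0]
    by (auto simp: feasible_def independent_contract_def signal_value_def)
qed

lemma independent_contract_profit:
  "profit \<gamma> (independent_contract z0 J v) = real (card J) * signal_value z0 v 0 - \<gamma> * v"
  by (simp add: profit_def independent_contract_def)

lemma optimal_contract_profit_ge_independent:
  assumes "optimal_contract n z0 \<gamma> E C" "J \<subseteq> buyers n" "independent_set E J" "z0 > 0" "v > 0"
  shows "real (card J) * signal_value z0 v 0 - \<gamma> * v \<le> profit \<gamma> C"
  using assms independent_contract_feasible[OF assms(2-5)]
  by (auto simp: optimal_contract_def independent_contract_profit[symmetric])

lemma gamma_z0_sq_le:
  assumes "z0 > 0" "\<gamma> > 0" "n \<ge> 1"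
    and "z0 < 1 / (2 * sqrt \<gamma>) * ((real n + 1) / (2 * real n + 1))"
  shows "\<gamma> * z0\<^sup>2 \<le> 2 / 15"
proof -
  have "(real n + 1) / (2 * real n + 1) \<le> 2 / 3"
    using assms(3) by (simp add: field_simps)
  then have "1 / (2 * sqrt \<gamma>) * ((real n + 1) / (2 * real n + 1)) \<le> 1 / (2 * sqrt \<gamma>) * (2 / 3)"
    using assms(2) by (intro mult_left_mono) auto
  then have "z0 < 1 / (2 * sqrt \<gamma>) * (2 / 3)"
    using assms(4) by linarith
  then have "sqrt \<gamma> * z0 < 1 / 3"
    using assms(2) by (simp add: field_simps)
  then have "(sqrt \<gamma> * z0)\<^sup>2 < (1 / 3)\<^sup>2"
    using assms(1,2) by (intro power_strict_mono) auto
  then have "\<gamma> * z0\<^sup>2 < 1 / 9"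
    using assms(2) by (simp add: power_mult_distrib power_divide)
  then show ?thesis
    by simp
qed

lemma exists_precision_independent_profit_gt:
  assumes z0: "z0 > 0" and "\<gamma> > 0" and small: "\<gamma> * z0\<^sup>2 \<le> 2 / 15"
    and w: "w > 0" and k: "k \<ge> 1"
    and s: "s < max (signal_value z0 w 0) (2 / (5 * z0)) * real k"
  obtains v where "v > 0" "s - \<gamma> * w < real k * signal_value z0 v 0 - \<gamma> * v"
proof (cases "2 / (5 * z0) \<le> signal_value z0 w 0")
  case True
  then show ?thesis
    using that[OF w] s by (simp add: mult.commute)
next
  case False
  \<comment> \<open>the precision \<open>2 z0\<close> earns \<open>2 / (3 z0)\<close> per buyer, and \<open>\<gamma> z0\<^sup>2 \<le> 2/15\<close> pays for it\<close>
  have cost: "\<gamma> * (2 * z0) \<le> real k * (4 / (15 * z0))"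
  proof -
    have "\<gamma> * (2 * z0) \<le> 4 / (15 * z0)"
      using small z0 by (simp add: field_simps power2_eq_square)
    also have "\<dots> \<le> real k * (4 / (15 * z0))"
      using k z0 by (intro mult_le_cancel_right1[THEN iffD2]) simp
    finally show ?thesis .
  qed
  have "s - \<gamma> * w < real k * (2 / (5 * z0))"
    using False s mult_pos_pos[OF \<open>\<gamma> > 0\<close> w] by (simp add: mult.commute)
  also have "\<dots> = real k * (2 / (3 * z0)) - real k * (4 / (15 * z0))"
    by (simp add: field_simps)
  also have "\<dots> \<le> real k * signal_value z0 (2 * z0) 0 - \<gamma> * (2 * z0)"
    using cost z0 by (simp add: signal_value_0)
  finally have "s - \<gamma> * w < real k * signal_value z0 (2 * z0) 0 - \<gamma> * (2 * z0)" .
  then show ?thesis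
    using z0 by (intro that[of "2 * z0"]) auto
qed

lemma optimal_contract_target_independent:
  assumes opt: "optimal_contract n z0 \<gamma> E C" and net: "network n E"
    and z0: "z0 > 0" and "\<gamma> > 0" and small: "\<gamma> * z0\<^sup>2 \<le> 2 / 15"
  shows "independent_set E (target C)"
proof (rule ccontr)
  \<comment> \<open>otherwise an independent subset of the target is a more profitable target\<close>
  assume dependent: "\<not> independent_set E (target C)"
  define T where "T = target C"
  define w where "w = prec C"
  define \<phi> where "\<phi> = signal_value z0 w"
  define c where "c = max (\<phi> 0) (2 / (5 * z0))"
  have feas: "feasible n z0 E C"
    using opt by (simp add: optimal_contract_def)
  then have T: "T \<subseteq> buyers n" "finite T" and w: "w > 0"
    using feasible_finite_target by (auto simp: feasible_def T_def w_def)
  have "antimono \<phi>"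
    using z0 w by (auto intro: antimonoI signal_value_antimono simp: \<phi>_def)
  moreover have strict_bound: "(real d + 1) * \<phi> d < c" if "d \<ge> 1" for d
    using signal_value_degree_bound[OF z0 w that] by (simp add: \<phi>_def c_def)
  moreover have "(real d + 1) * \<phi> d \<le> c" for d
    using strict_bound[of d] by (cases "d = 0") (auto simp: c_def)
  ultimately obtain J where J: "J \<subseteq> T" "independent_set E J" "J \<noteq> {}"
    and sum_lt: "(\<Sum>i\<in>T. \<phi> (degree_in E T i)) < c * card J"
    using independent_subset_bounds_degree_sum[of E \<phi> c T] net T(2) dependent
    by (auto simp: network_def T_def independent_set_def)
  have "card J \<ge> 1"
    using J T(2) by (simp add: Suc_le_eq card_gt_0_iff finite_subset)
  then obtain v where "v > 0" and
    better: "profit \<gamma> C < real (card J) * signal_value z0 v 0 - \<gamma> * v"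
    using exists_precision_independent_profit_gt[OF z0 \<open>\<gamma> > 0\<close> small w _ sum_lt[unfolded c_def \<phi>_def]]
      optimal_contract_profit[OF opt] mcount_eq_degree_in[OF T(1)[unfolded T_def]]
    by (auto simp: T_def w_def \<phi>_def)
  moreover have "real (card J) * signal_value z0 v 0 - \<gamma> * v \<le> profit \<gamma> C"
    using J T(1) z0 \<open>v > 0\<close> by (intro optimal_contract_profit_ge_independent[OF opt]) auto
  ultimately show False
    by simp
qed

lemma optimal_independent_payoff_target:
  assumes opt: "optimal_contract n z0 \<gamma> E C" and "independent_set E (target C)"
    and "i \<in> target C"
  shows "buyer_payoff n z0 E C i = - 1 / z0"
  using optimal_contract_price[OF opt assms(3)] mcount_independent_target[OF assms(2,3)] assms(3)
  by (simp add: buyer_payoff_def signal_value_0)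

lemma optimal_independent_profit:
  assumes opt: "optimal_contract n z0 \<gamma> E C" and "independent_set E (target C)"
  shows "profit \<gamma> C = real (card (target C)) * signal_value z0 (prec C) 0 - \<gamma> * prec C"
  using optimal_contract_profit[OF opt] mcount_independent_target[OF assms(2)] by simp

lemma inverse_midpoint_less:
  fixes a b :: real
  assumes "a > 0" "b > 0" "a \<noteq> b"
  shows "2 / (a + b) < (1 / a + 1 / b) / 2"
proof -
  have "0 < (a - b)\<^sup>2"
    using assms(3) by simp
  then have "4 * (a * b) < (a + b) * (a + b)"
    by (simp add: power2_eq_square algebra_simps)
  then show ?thesis
    using assms(1,2) by (simp add: field_simps)
qed

lemma independent_profit_argmax_unique:
  fixes k :: nat and z0 \<gamma> z w :: real
  defines "f \<equiv> \<lambda>v. real k * signal_value z0 v 0 - \<gamma> * v"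
  assumes z0: "z0 > 0" and k: "k \<ge> 1" and z: "z > 0" and w: "w > 0"
    and max: "\<And>v. v > 0 \<Longrightarrow> f v \<le> f z" and "f z \<le> f w"
  shows "w = z"
proof (rule ccontr)
  assume "w \<noteq> z"
  \<comment> \<open>by strict concavity \<open>f\<close> exceeds the mean of \<open>f z\<close> and \<open>f w\<close>, hence \<open>f z\<close>, at the midpoint\<close>
  define u where "u = (z + w) / 2"
  have f_eq: "f v = real k / z0 - real k * (1 / (z0 + v)) - \<gamma> * v" for v
    by (simp add: f_def signal_value_0 algebra_simps)
  have "1 / (z0 + u) < (1 / (z0 + z) + 1 / (z0 + w)) / 2"
    using inverse_midpoint_less[of "z0 + z" "z0 + w"] z0 z w \<open>w \<noteq> z\<close>
    by (simp add: u_def field_simps)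
  then have "real k * (2 * (1 / (z0 + u))) < real k * (1 / (z0 + z) + 1 / (z0 + w))"
    using k by (intro mult_strict_left_mono) auto
  then have "2 * (real k * (1 / (z0 + u))) < real k * (1 / (z0 + z)) + real k * (1 / (z0 + w))"
    by (simp add: algebra_simps)
  moreover have "2 * (\<gamma> * u) = \<gamma> * z + \<gamma> * w"
    by (simp add: u_def algebra_simps)
  ultimately have "f z < f u"
    using \<open>f z \<le> f w\<close> unfolding f_eq by argo
  moreover have "u > 0"
    using z w by (simp add: u_def)
  ultimately show False
    using max by fastforce
qed

lemma optimal_independent_precision_unique:
  assumes z0: "z0 > 0"
    and opt: "optimal_contract n z0 \<gamma> E C" and indep: "independent_set E (target C)"
    and opt': "optimal_contract n z0 \<gamma> E' C'" and indep': "independent_set E' (target C')"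
    and "target C \<noteq> {}" and "card (target C') = card (target C)"
    and "profit \<gamma> C \<le> profit \<gamma> C'"
  shows "prec C' = prec C"
proof -
  have T: "target C \<subseteq> buyers n" "finite (target C)" and "prec C > 0" "prec C' > 0"
    using opt opt' feasible_finite_target by (auto simp: optimal_contract_def feasible_def)
  moreover have "card (target C) \<ge> 1"
    using T(2) \<open>target C \<noteq> {}\<close> by (simp add: Suc_le_eq card_gt_0_iff)
  ultimately show ?thesis
    using z0 assms(7,8) optimal_independent_profit[OF opt indep] optimal_independent_profit[OF opt' indep']
      optimal_contract_profit_ge_independent[OF opt T(1) indep z0]
    by (intro independent_profit_argmax_unique[of z0 "card (target C)"]) auto
qed

section \<open>Core-periphery networks\<close>

lemma core_periphery_periphery:
  assumes "core_periphery n E K P"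
  shows "P \<subseteq> buyers n" "finite P" "independent_set E P"
  using assms by (auto simp: core_periphery_def independent_set_def buyers_def intro: finite_subset)

lemma core_periphery_mcount:
  assumes cp: "core_periphery n E K P" and "target C = P" and i: "i \<in> buyers n"
  shows "mcount n E C i = (if i \<in> P then 0 else card P)"
proof -
  have "P \<subseteq> buyers n" and "i \<notin> P \<Longrightarrow> j \<in> buyers n \<Longrightarrow> j \<noteq> i \<Longrightarrow> E i j" for j
    using cp i by (auto simp: core_periphery_def)
  moreover have "\<not> E i j" if "i \<in> P" "j \<in> P" for j
    using cp that by (simp add: core_periphery_def)
  ultimately have "nbrs n E i \<inter> P = (if i \<in> P then {} else P)"
    by (auto simp: nbrs_def)
  then show ?thesis
    using assms(2) by (simp add: mcount_def)
qed

lemma core_periphery_optimal_payoff: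
  assumes cp: "core_periphery n E K P" and opt: "optimal_contract n z0 \<gamma> E C"
    and targ: "target C = P" and i: "i \<in> buyers n"
  shows "buyer_payoff n z0 E C i = (if i \<in> P then - 1 / z0 else - 1 / (z0 + real (card P) * prec C))"
proof (cases "i \<in> P")
  case True
  then show ?thesis
    using optimal_independent_payoff_target[OF opt, of i] core_periphery_periphery(3)[OF cp] targ
    by simp
next
  case False
  then show ?thesis
    using core_periphery_mcount[OF cp targ i] targ by (simp add: buyer_payoff_def)
qed

lemma pareto_improvement_targets_periphery:
  assumes z0: "z0 > 0" and cp: "core_periphery n E K P"
    and opt: "optimal_contract n z0 \<gamma> E C" and targ: "target C = P" and "P \<noteq> {}"
    and opt': "optimal_contract n z0 \<gamma> E' C'" and indep': "independent_set E' (target C')"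
    and prof: "profit \<gamma> C \<le> profit \<gamma> C'"
    and pay: "\<forall>i\<in>buyers n. buyer_payoff n z0 E C i \<le> buyer_payoff n z0 E' C' i"
  shows "target C' = P"
proof -
  note P = core_periphery_periphery[OF cp]
  have z: "prec C > 0" and w: "prec C' > 0" and T: "target C' \<subseteq> buyers n"
    using opt opt' by (auto simp: optimal_contract_def feasible_def)
  \<comment> \<open>a core buyer served by \<open>C'\<close> would lose the signals of the whole periphery\<close>
  have "target C' \<subseteq> P"
  proof
    fix k assume k: "k \<in> target C'"
    show "k \<in> P"
    proof (rule ccontr)
      assume "k \<notin> P"
      have "k \<in> buyers n"
        using k T by blast
      then have "- 1 / z0 \<ge> - 1 / (z0 + real (card P) * prec C)"
        using pay core_periphery_optimal_payoff[OF cp opt targ] \<open>k \<notin> P\<close>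
          optimal_independent_payoff_target[OF opt' indep' k] by fastforce
      moreover have "real (card P) * prec C > 0"
        using z P(2) \<open>P \<noteq> {}\<close> by (simp add: card_gt_0_iff)
      then have "1 / (z0 + real (card P) * prec C) < 1 / z0"
        using z0 by (intro divide_strict_left_mono) auto
      ultimately show False
        by simp
    qed
  qed
  moreover have "card P \<le> card (target C')"
  proof -
    have "real (card P) * signal_value z0 (prec C') 0 - \<gamma> * prec C' \<le> profit \<gamma> C"
      using optimal_contract_profit_ge_independent[OF opt P(1,3) z0 w] .
    then have "real (card P) * signal_value z0 (prec C') 0
        \<le> real (card (target C')) * signal_value z0 (prec C') 0"
      using prof optimal_independent_profit[OF opt' indep'] by simp
    then show ?thesis
      using signal_value_pos[OF z0 w] by simp
  qed
  ultimately show ?thesis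
    using P(2) by (simp add: card_seteq)
qed

lemma core_periphery_better_off_prec_less:
  assumes z0: "z0 > 0" and cp: "core_periphery n E K P"
    and opt: "optimal_contract n z0 \<gamma> E C" and targ: "target C = P"
    and opt': "optimal_contract n z0 \<gamma> E' C'" and targ': "target C' = P"
    and i: "i \<in> buyers n" "i \<notin> P"
    and better: "buyer_payoff n z0 E C i < buyer_payoff n z0 E' C' i"
  shows "prec C < prec C'"
proof -
  have z: "prec C > 0" and w: "prec C' > 0"
    using opt opt' by (auto simp: optimal_contract_def feasible_def)
  have "mcount n E' C' i \<le> card P"
    unfolding mcount_def targ' using core_periphery_periphery(2)[OF cp] by (intro card_mono) auto
  then have "real (mcount n E' C' i) * prec C' \<le> real (card P) * prec C'"
    using w by (intro mult_right_mono) auto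
  moreover have "1 / (z0 + real (mcount n E' C' i) * prec C') < 1 / (z0 + real (card P) * prec C)"
    using better core_periphery_optimal_payoff[OF cp opt targ i(1)] i(2) targ'
    by (simp add: buyer_payoff_def)
  then have "real (card P) * prec C < real (mcount n E' C' i) * prec C'"
    using z0 z w by (simp add: inverse_less_iff_less[symmetric] inverse_eq_divide add_pos_nonneg)
  ultimately have "real (card P) * prec C < real (card P) * prec C'"
    by linarith
  then show ?thesis
    by (simp add: mult_less_cancel_left)
qed

theorem proposition5:
  fixes n m :: nat and z0 \<gamma> :: real
    and E :: "nat \<Rightarrow> nat \<Rightarrow> bool" and K P :: "nat set" and C :: contract
  assumes z0_pos: "z0 > 0" and gamma_pos: "\<gamma> > 0"
    and z0_small: "z0 < 1 / (2 * sqrt \<gamma>) * ((real n + 1) / (2 * real n + 1))"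
    and net: "network n E"
    and cp: "core_periphery n E K P"
    and card_P: "card P = m"
    and opt: "optimal_contract n z0 \<gamma> E C"
    and targ: "target C = P"
  shows "\<not> (\<exists>E' C'. network n E' \<and> optimal_contract n z0 \<gamma> E' C' \<and>
             profit \<gamma> C' \<ge> profit \<gamma> C \<and>
             (\<forall>i \<in> buyers n. buyer_payoff n z0 E' C' i \<ge> buyer_payoff n z0 E C i) \<and>
             (\<exists>i \<in> buyers n. buyer_payoff n z0 E' C' i > buyer_payoff n z0 E C i))"
proof
  assume "\<exists>E' C'. network n E' \<and> optimal_contract n z0 \<gamma> E' C' \<and>
             profit \<gamma> C' \<ge> profit \<gamma> C \<and>
             (\<forall>i \<in> buyers n. buyer_payoff n z0 E' C' i \<ge> buyer_payoff n z0 E C i) \<and>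
             (\<exists>i \<in> buyers n. buyer_payoff n z0 E' C' i > buyer_payoff n z0 E C i)"
  then obtain E' C' i where net': "network n E'" and opt': "optimal_contract n z0 \<gamma> E' C'"
    and prof: "profit \<gamma> C \<le> profit \<gamma> C'"
    and pay: "\<forall>i \<in> buyers n. buyer_payoff n z0 E C i \<le> buyer_payoff n z0 E' C' i"
    and i: "i \<in> buyers n" and better: "buyer_payoff n z0 E C i < buyer_payoff n z0 E' C' i"
    by blast
  have "P \<noteq> {}"
    using optimal_contract_target_nonempty[OF opt gamma_pos] targ by simp
  then have "n \<ge> 1"
    using cp by (auto simp: core_periphery_def buyers_def)
  then have indep': "independent_set E' (target C')"
    using optimal_contract_target_independent[OF opt' net' z0_pos gamma_pos]
      gamma_z0_sq_le[OF z0_pos gamma_pos _ z0_small] by blast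
  have T: "target C' = P"
    using pareto_improvement_targets_periphery[OF z0_pos cp opt targ \<open>P \<noteq> {}\<close> opt' indep' prof pay] .
  have "i \<notin> P"
    using better core_periphery_optimal_payoff[OF cp opt targ i]
      optimal_independent_payoff_target[OF opt' indep'] T by auto
  then have "prec C < prec C'"
    using core_periphery_better_off_prec_less[OF z0_pos cp opt targ opt' T i _ better] by blast
  moreover have "prec C' = prec C"
    using optimal_independent_precision_unique[OF z0_pos opt _ opt' indep'] T targ prof
      core_periphery_periphery(3)[OF cp] \<open>P \<noteq> {}\<close> by simp
  ultimately show False
    by simp
qed

end
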